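(* Let $K$ be a finite field of characteristic $p$ and order $q$, let $s$ be a positive integer with $\gcd(s,q-1)=1$, and let $\tau$ be the permutation of $\mathcal{W}_{K,s}$ defined below. Then $\tau$ is a single cycle (i.e., a cycle containing all elements of $\mathcal{W}_{K,s}$) if and only if $K=\mathbb{F}_2$; in that case $s$ is degenerate and $\tau$ is a $1$-cycle.
   Context: $\zeta=\exp(2\pi i/p)$, $\psi(x)=\zeta^{\mathrm{Tr}(x)}$ with $\mathrm{Tr}$ the absolute trace of $K$ to $\mathbb{F}_p$; $W_u=\sum_{x\in K}\psi(x^s-ux)$; $\mathcal{W}_{K,s}=\{W_u:u\in K^\times\}$. Let $\gamma$ be a primitive element of $\mathbb{F}_p$ and $\sigma\in\mathrm{Gal}(\mathbb{Q}(\zeta)/\mathbb{Q})$ with $\sigma(\zeta)=\zeta^\gamma$; it is known that $\sigma(W_u)=W_{\gamma^{1-1/s}u}$ (with $1/s$ the inverse of $s$ mod $p-1$), so $\sigma$ restricts to a permutation $\tau$ of $\mathcal{W}_{K,s}$. The exponent $s$ is degenerate over $K$ if $s\equiv p^k\pmod{q-1}$ for some integer $k$. *)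

theory Defs
  imports "HOL-Analysis.Analysis" "HOL-Number_Theory.Number_Theory"
begin

text \<open>K is modelled by a finite field type 'a; p = CHAR('a), q = CARD('a) = p^n.\<close>

definition ext_deg :: "'a::{finite,field} itself \<Rightarrow> nat" where
  "ext_deg T = (THE n. CARD('a) = CHAR('a) ^ n)"

text \<open>Absolute trace K -> F_p (as an element of K lying in the prime field).\<close>
definition abs_trace :: "'a::{finite,field} \<Rightarrow> 'a" where
  "abs_trace x = (\<Sum>i<ext_deg TYPE('a). x ^ (CHAR('a) ^ i))"

definition trace_nat :: "'a::{finite,field} \<Rightarrow> nat" where
  "trace_nat x = (THE k. k < CHAR('a) \<and> of_nat k = abs_trace x)"

definition zeta :: "nat \<Rightarrow> complex" where
  "zeta p = cis (2 * pi / real p)"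

definition psi :: "'a::{finite,field} \<Rightarrow> complex" where
  "psi x = zeta CHAR('a) ^ trace_nat x"

definition Wsum :: "nat \<Rightarrow> 'a::{finite,field} \<Rightarrow> complex" where
  "Wsum s u = (\<Sum>x\<in>UNIV. psi (x ^ s - u * x))"

definition Wset :: "'a::{finite,field} itself \<Rightarrow> nat \<Rightarrow> complex set" where
  "Wset T s = {Wsum s (u::'a) | u. u \<noteq> 0}"

definition Qzeta :: "nat \<Rightarrow> complex set" where
  "Qzeta p = {\<Sum>j<p. of_rat (r j) * zeta p ^ j | r. True}"

definition is_galois_sigma :: "nat \<Rightarrow> nat \<Rightarrow> (complex \<Rightarrow> complex) \<Rightarrow> bool" where
  "is_galois_sigma p \<gamma> \<sigma> \<longleftrightarrow>
     (\<forall>x\<in>Qzeta p. \<forall>y\<in>Qzeta p. \<sigma> (x + y) = \<sigma> x + \<sigma> y \<and> \<sigma> (x * y) = \<sigma> x * \<sigma> y)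
     \<and> \<sigma> 1 = 1 \<and> \<sigma> (zeta p) = zeta p ^ \<gamma>"

definition single_cycle :: "('b \<Rightarrow> 'b) \<Rightarrow> 'b set \<Rightarrow> bool" where
  "single_cycle f A \<longleftrightarrow> A \<noteq> {} \<and> (\<forall>w\<in>A. A = {(f ^^ n) w | n. True})"

definition degenerate :: "'a::{finite,field} itself \<Rightarrow> nat \<Rightarrow> bool" where
  "degenerate T s \<longleftrightarrow> (\<exists>k. [s = CHAR('a) ^ k] (mod (CARD('a) - 1)))"

end

theory Submission
  imports Defs
begin

(* For K = F_2 the only sum is W_1 = 2, which sigma fixes. Otherwise consider
   T(w) = sum_{n < p - 1} sigma^n(w). As gamma^n runs through the nonzero residues mod p,
   T(W_u) = p N(u) - q, where N(u) counts the x with Tr(x^s - u x) = 0; and T is constant on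
   sigma-orbits, because sigma^k only multiplies the exponents of zeta by the unit gamma^k.
   So if sigma were a single cycle, N(u) would not depend on u /= 0. Double counting the pairs
   (u, x), and using that x |-> x^s is bijective, gives Z + (q - 1) N(1) = q + (q - 1) Z for the
   size Z of the kernel of the trace; as 0 < Z < q this forces Z = 1 and N(1) = 2. But Z = 1
   makes the trace injective, so K = F_p with p odd, s is odd, and 0, 1, -1 are three zeros
   of Tr(x^s - x). *)

lemma prime_CHAR_finite_field: "prime CHAR('a::{finite,field})"
  by (rule prime_CHAR_semidom) (rule finite_imp_CHAR_pos, simp)

lemma CHAR_ge_2: "CHAR('a::{finite,field}) \<ge> 2"
  using prime_CHAR_finite_field[where 'a='a] prime_ge_2_nat by blast

lemma CARD_ge_2: "CARD('a::{finite,field}) \<ge> 2"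
proof -
  have "card {0::'a, 1} \<le> CARD('a)" by (rule card_mono) auto
  thus ?thesis by simp
qed

lemma power_CARD_minus_1:
  fixes x :: "'a::{finite,field}"
  assumes "x \<noteq> 0"
  shows "x ^ (CARD('a) - 1) = 1"
proof -
  let ?U = "UNIV - {0::'a}"
  have "x ^ card ?U * (\<Prod>y\<in>?U. y) = (\<Prod>y\<in>?U. x * y)"
    by (simp add: prod.distrib)
  also have "\<dots> = (\<Prod>y\<in>?U. y)"
    by (rule prod.reindex_bij_witness[of _ "\<lambda>y. y / x" "\<lambda>y. x * y"]) (use assms in auto)
  finally show ?thesis by (simp add: card_Diff_singleton)
qed

lemma power_eq_1_if_CARD_minus_1_dvd:
  fixes x :: "'a::{finite,field}"
  assumes "x \<noteq> 0" and "CARD('a) - 1 dvd m"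
  shows "x ^ m = 1"
  using assms power_CARD_minus_1[OF assms(1)] by (auto elim!: dvdE simp: power_mult)

lemma power_CARD_eq_self: "x ^ CARD('a) = (x::'a::{finite,field})"
proof (cases "x = 0")
  case False
  have "x ^ CARD('a) = x * x ^ (CARD('a) - 1)"
    using CARD_ge_2[where 'a='a] by (simp flip: power_Suc)
  thus ?thesis using power_CARD_minus_1[OF False] by simp
qed simp

lemma inj_power_if_coprime:
  assumes "s > 0" and "coprime s (CARD('a::{finite,field}) - 1)"
  shows "inj (\<lambda>x::'a. x ^ s)"
proof -
  define d where "d = CARD('a) - 1"
  have "d > 0" using CARD_ge_2[where 'a='a] by (simp add: d_def)
  obtain t where inv: "[s * t = 1] (mod d)"
    using cong_solve_coprime_nat[OF assms(2)] by (auto simp: d_def)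
  \<comment> \<open>shifting \<open>t\<close> by \<open>d\<close> makes the exponent positive even when \<open>d = 1\<close>\<close>
  have "[s * (t + d) = s * t] (mod d)" by (simp add: cong_def distrib_left)
  from cong_trans[OF this inv] have t: "[s * (t + d) = 1] (mod d)" .
  have t_pos: "s * (t + d) > 0" using assms(1) \<open>d > 0\<close> by simp
  have "(x ^ s) ^ (t + d) = x" for x :: 'a
  proof (cases "x = 0")
    case False
    have "d dvd s * (t + d) - 1" using cong_to_1_nat[OF t] .
    hence "x ^ (s * (t + d) - 1) = 1" by (rule power_eq_1_if_CARD_minus_1_dvd[OF False, folded d_def])
    moreover have "s * (t + d) = Suc (s * (t + d) - 1)" using t_pos by simp
    ultimately have "x ^ (s * (t + d)) = x" by (metis power_Suc2 mult_1)
    thus ?thesis by (simp add: power_mult)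
  qed (use t_pos in \<open>simp add: power_mult[symmetric]\<close>)
  thus ?thesis by (metis injI)
qed

lemma of_nat_power_CHAR: "(of_nat k :: 'a::{finite,field}) ^ CHAR('a) = of_nat k"
proof (induction k)
  case (Suc k)
  thus ?case by (simp add: freshmans_dream[OF prime_CHAR_finite_field refl])
qed (use CHAR_ge_2[where 'a='a] in simp)

lemma of_nat_inverse_in_prime_field:
  assumes "\<not> CHAR('a::{finite,field}) dvd k"
  obtains m where "of_nat m * of_nat k = (1::'a)"
proof -
  have "coprime k CHAR('a)"
    using assms prime_CHAR_finite_field prime_imp_coprime by (metis coprime_commute)
  then obtain m where "[k * m = 1] (mod CHAR('a))" using cong_solve_coprime_nat by auto
  hence "of_nat (m * k) = (of_nat 1 :: 'a)" by (simp only: of_nat_eq_iff_cong_CHAR mult.commute)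
  thus ?thesis using that by simp
qed

definition add_closed :: "'a::{zero,plus} set \<Rightarrow> bool" where
  "add_closed V \<longleftrightarrow> 0 \<in> V \<and> (\<forall>x\<in>V. \<forall>y\<in>V. x + y \<in> V)"

lemma add_closed_of_nat_mult:
  assumes "add_closed V" and "x \<in> V"
  shows "of_nat m * x \<in> V"
  using assms by (induction m) (auto simp: add_closed_def distrib_right)

lemma add_closed_uminus:
  fixes V :: "'a::{finite,field} set"
  assumes "add_closed V" and "x \<in> V"
  shows "- x \<in> V"
proof -
  have "of_nat (CHAR('a) - 1) * x + x = of_nat CHAR('a) * x"
    using CHAR_ge_2[where 'a='a] by (simp add: algebra_simps of_nat_diff)
  hence "of_nat (CHAR('a) - 1) * x = - x" by (simp add: eq_neg_iff_add_eq_0)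
  thus ?thesis using add_closed_of_nat_mult[OF assms] by metis
qed

definition add_closed_extend :: "'a::{finite,field} set \<Rightarrow> 'a \<Rightarrow> 'a set" where
  "add_closed_extend V a = (\<lambda>(v, i). v + of_nat i * a) ` (V \<times> {..<CHAR('a)})"

lemma add_closed_add_closed_extend:
  assumes "add_closed V"
  shows "add_closed (add_closed_extend V a)"
  unfolding add_closed_def
proof (intro conjI ballI)
  show "0 \<in> add_closed_extend V a"
    unfolding add_closed_extend_def
    by (rule image_eqI[where x="(0, 0)"]) (use assms CHAR_ge_2[where 'a='a] in \<open>auto simp: add_closed_def\<close>)
next
  fix x y assume "x \<in> add_closed_extend V a" "y \<in> add_closed_extend V a"
  then obtain v i w j where vw: "v \<in> V" "w \<in> V"
    and x: "x = v + of_nat i * a" and y: "y = w + of_nat j * a"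
    by (auto simp: add_closed_extend_def)
  have "of_nat (i + j) = (of_nat ((i + j) mod CHAR('a)) :: 'a)"
    by (simp only: of_nat_eq_iff_cong_CHAR cong_def mod_mod_trivial)
  hence "x + y = (v + w) + of_nat ((i + j) mod CHAR('a)) * a"
    unfolding x y by (metis add.assoc add.left_commute distrib_right of_nat_add)
  moreover have "v + w \<in> V" using assms vw by (auto simp: add_closed_def)
  moreover have "(i + j) mod CHAR('a) < CHAR('a)" using CHAR_ge_2[where 'a='a] by simp
  ultimately show "x + y \<in> add_closed_extend V a"
    by (auto simp: add_closed_extend_def image_iff)
qed

lemma card_add_closed_extend:
  fixes V :: "'a::{finite,field} set"
  assumes V: "add_closed V" and a: "a \<notin> V"
  shows "card (add_closed_extend V a) = card V * CHAR('a)"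
proof -
  have no_collision: False if vw: "v \<in> V" "w \<in> V" and ij: "i < j" "j < CHAR('a)"
    and eq: "v + of_nat i * a = w + of_nat j * a" for v w i j
  proof -
    have "\<not> CHAR('a) dvd j - i" using ij by (auto dest: dvd_imp_le)
    then obtain m where m: "of_nat m * of_nat (j - i) = (1::'a)"
      by (rule of_nat_inverse_in_prime_field)
    have "of_nat (j - i) * a = v + - w"
      using eq ij(1) by (simp add: of_nat_diff algebra_simps)
    also have "\<dots> \<in> V"
      using vw V add_closed_uminus[OF V] unfolding add_closed_def by blast
    finally have "of_nat m * (of_nat (j - i) * a) \<in> V" by (rule add_closed_of_nat_mult[OF V])
    thus False using a m by (simp add: mult.assoc[symmetric])
  qed
  have "inj_on (\<lambda>(v, i). v + of_nat i * a) (V \<times> {..<CHAR('a)})"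
  proof (rule inj_onI, clarsimp)
    fix v i w j
    assume h: "v \<in> V" "i < CHAR('a)" "w \<in> V" "j < CHAR('a)"
      "v + of_nat i * a = w + of_nat j * a"
    have "i = j"
      using no_collision[OF h(1,3) _ h(4,5)] no_collision[OF h(3,1) _ h(2) h(5)[symmetric]]
      by (metis linorder_neqE_nat)
    thus "v = w \<and> i = j" using h(5) by simp
  qed
  thus ?thesis by (simp add: add_closed_extend_def card_image card_cartesian_product)
qed

lemma CARD_eq_CHAR_power: "\<exists>n. CARD('a::{finite,field}) = CHAR('a) ^ n"
proof -
  have grow: "\<exists>n. CARD('a) = CHAR('a) ^ n" if "add_closed V" "card V = CHAR('a) ^ k"
    for V :: "'a set" and k
    using that
  proof (induction "CARD('a) - card V" arbitrary: V k rule: less_induct)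
    case (less V k)
    show ?case
    proof (cases "V = UNIV")
      case False
      then obtain a where a: "a \<notin> V" by auto
      let ?V' = "add_closed_extend V a"
      have "card V > 0" using less(2) by (auto simp: add_closed_def card_gt_0_iff)
      hence "card V < card ?V'"
        using card_add_closed_extend[OF less(2) a] CHAR_ge_2[where 'a='a] by simp
      moreover have "card ?V' \<le> CARD('a)" by (rule card_mono) auto
      ultimately have "CARD('a) - card ?V' < CARD('a) - card V" by linarith
      moreover have "card ?V' = CHAR('a) ^ Suc k"
        using card_add_closed_extend[OF less(2) a] less(3) by simp
      ultimately show ?thesis
        using less(1) add_closed_add_closed_extend[OF less(2)] by blast
    qed (use less in auto)
  qed
  show ?thesis by (rule grow[of "{0}" 0]) (auto simp: add_closed_def)
qed

lemma CARD_eq_CHAR_power_ext_deg: "CARD('a::{finite,field}) = CHAR('a) ^ ext_deg TYPE('a)"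
proof -
  obtain n where n: "CARD('a) = CHAR('a) ^ n" using CARD_eq_CHAR_power by blast
  have "ext_deg TYPE('a) = n" unfolding ext_deg_def
    by (rule the_equality) (use n CHAR_ge_2[where 'a='a] power_inject_exp in auto)
  with n show ?thesis by simp
qed

lemma ext_deg_pos: "ext_deg TYPE('a::{finite,field}) > 0"
proof (rule ccontr)
  assume "\<not> ?thesis"
  thus False using CARD_eq_CHAR_power_ext_deg[where 'a='a] CARD_ge_2[where 'a='a] by simp
qed

lemma prime_field_eq_roots: "{y::'a::{finite,field}. y ^ CHAR('a) = y} = of_nat ` {..<CHAR('a)}"
proof -
  let ?P = "of_nat ` {..<CHAR('a)} :: 'a set"
  have sub: "?P \<subseteq> {y. y ^ CHAR('a) = y}" by (auto simp: of_nat_power_CHAR)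
  have "inj_on (of_nat :: nat \<Rightarrow> 'a) {..<CHAR('a)}"
    by (rule inj_onI) (simp add: of_nat_eq_iff_cong_CHAR cong_def)
  hence card_P: "card ?P = CHAR('a)" by (simp add: card_image)
  define X :: "'a poly" where "X = Polynomial.monom 1 (CHAR('a)) - Polynomial.monom 1 1"
  have "Polynomial.coeff X (CHAR('a)) = 1" using CHAR_ge_2[where 'a='a] by (simp add: X_def)
  hence "X \<noteq> 0" by auto
  moreover have "degree X \<le> CHAR('a)" unfolding X_def
    by (intro degree_diff_le) (use CHAR_ge_2[where 'a='a] in \<open>simp_all add: degree_monom_eq\<close>)
  moreover have "{y. poly X y = 0} = {y. y ^ CHAR('a) = y}" by (simp add: X_def poly_monom)
  ultimately have "card {y::'a. y ^ CHAR('a) = y} \<le> card ?P"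
    using card_poly_roots_bound[of X] card_P by simp
  moreover have "card ?P \<le> card {y::'a. y ^ CHAR('a) = y}" by (rule card_mono[OF _ sub]) simp
  ultimately show ?thesis using sub by (intro card_subset_eq[symmetric]) auto
qed

lemma abs_trace_add: "abs_trace (x + y) = abs_trace x + abs_trace (y::'a::{finite,field})"
  unfolding abs_trace_def by (simp add: sum.distrib freshmans_dream'[OF prime_CHAR_finite_field refl])

lemma abs_trace_0 [simp]: "abs_trace (0::'a::{finite,field}) = 0"
  unfolding abs_trace_def using CHAR_ge_2[where 'a='a] by (simp add: power_0_left)

lemma abs_trace_diff: "abs_trace (x - y) = abs_trace x - abs_trace (y::'a::{finite,field})"
  using abs_trace_add[of "x - y" y] by (simp add: algebra_simps)

lemma abs_trace_power_CHAR: "abs_trace (x::'a::{finite,field}) ^ CHAR('a) = abs_trace x"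
proof -
  let ?p = "CHAR('a)" and ?n = "ext_deg TYPE('a)"
  define g where "g i = x ^ (?p ^ i)" for i
  have "abs_trace x ^ ?p = (\<Sum>i<?n. g (Suc i))"
    unfolding abs_trace_def g_def
    by (simp add: freshmans_dream_sum[OF prime_CHAR_finite_field refl] power_mult[symmetric] mult.commute)
  also have "\<dots> = (\<Sum>i<?n. g i)"
    using sum.lessThan_Suc_shift[of g ?n] power_CARD_eq_self[of x]
    by (simp add: g_def flip: CARD_eq_CHAR_power_ext_deg)
  finally show ?thesis by (simp add: abs_trace_def g_def)
qed

lemma abs_trace_in_prime_field: "abs_trace (x::'a::{finite,field}) \<in> of_nat ` {..<CHAR('a)}"
  using abs_trace_power_CHAR[of x] prime_field_eq_roots[where 'a='a] by blast

lemma trace_nat_spec: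
  "trace_nat (x::'a::{finite,field}) < CHAR('a)" "of_nat (trace_nat x) = abs_trace x"
proof -
  have "\<exists>!k. k < CHAR('a) \<and> of_nat k = abs_trace x"
  proof (rule ex_ex1I)
    show "\<exists>k. k < CHAR('a) \<and> of_nat k = abs_trace x" using abs_trace_in_prime_field[of x] by force
  next
    fix k l assume k: "k < CHAR('a) \<and> of_nat k = abs_trace x"
      and l: "l < CHAR('a) \<and> of_nat l = abs_trace x"
    hence "(of_nat k :: 'a) = of_nat l" by simp
    hence "k mod CHAR('a) = l mod CHAR('a)" by (simp only: of_nat_eq_iff_cong_CHAR cong_def)
    thus "k = l" using k l by simp
  qed
  from theI'[OF this] show "trace_nat x < CHAR('a)" "of_nat (trace_nat x) = abs_trace x"
    unfolding trace_nat_def by auto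
qed

lemma CHAR_dvd_trace_nat_iff: "CHAR('a) dvd trace_nat (x::'a::{finite,field}) \<longleftrightarrow> abs_trace x = 0"
  by (simp flip: of_nat_eq_0_iff_char_dvd trace_nat_spec(2))

lemma trace_nat_0 [simp]: "trace_nat (0::'a::{finite,field}) = 0"
  using CHAR_dvd_trace_nat_iff[of "0::'a"] trace_nat_spec(1)[of "0::'a"] by (auto dest: dvd_imp_le)

text \<open>The trace is a polynomial of degree \<open>p^(n-1) < q\<close>, so it cannot vanish on all of \<open>K\<close>.\<close>

lemma abs_trace_not_identically_zero: "\<exists>x::'a::{finite,field}. abs_trace x \<noteq> 0"
proof (rule ccontr)
  let ?p = "CHAR('a)" and ?n = "ext_deg TYPE('a)"
  assume trace_zero: "\<not> ?thesis"
  define X :: "'a poly" where "X = (\<Sum>i<?n. Polynomial.monom 1 (?p ^ i))"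
  have "Polynomial.coeff X (?p ^ (?n - 1)) = (\<Sum>i<?n. if ?p ^ i = ?p ^ (?n - 1) then 1 else 0)"
    by (simp add: X_def coeff_sum)
  also have "\<dots> = (\<Sum>i\<in>{?n - 1}. 1)"
    using CHAR_ge_2[where 'a='a] ext_deg_pos[where 'a='a] power_inject_exp
    by (intro sum.mono_neutral_cong_right) auto
  finally have "X \<noteq> 0" by auto
  moreover have "degree X \<le> ?p ^ (?n - 1)" unfolding X_def
    using CHAR_ge_2[where 'a='a]
    by (intro degree_sum_le) (auto simp: degree_monom_eq intro: power_increasing)
  moreover have "{y. poly X y = 0} = UNIV"
    using trace_zero by (simp add: X_def poly_sum poly_monom abs_trace_def)
  ultimately have "CARD('a) \<le> ?p ^ (?n - 1)" using card_poly_roots_bound[of X] by simp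
  moreover have "?p ^ (?n - 1) < ?p ^ ?n"
    using CHAR_ge_2[where 'a='a] ext_deg_pos[where 'a='a] by (intro power_strict_increasing) auto
  ultimately show False using CARD_eq_CHAR_power_ext_deg[where 'a='a] by simp
qed

definition trace_zeros :: "nat \<Rightarrow> 'a::{finite,field} \<Rightarrow> nat" where
  "trace_zeros s u = card {x::'a. abs_trace (x ^ s - u * x) = 0}"

lemma card_trace_kernel_pos: "0 < card {y::'a::{finite,field}. abs_trace y = 0}"
  by (auto simp: card_gt_0_iff intro!: exI[of _ 0])

lemma card_trace_kernel_less: "card {y::'a::{finite,field}. abs_trace y = 0} < CARD('a)"
  using abs_trace_not_identically_zero[where 'a='a] by (intro psubset_card_mono) auto

lemma trace_zeros_0:
  assumes "s > 0" and "coprime s (CARD('a::{finite,field}) - 1)"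
  shows "trace_zeros s (0::'a) = card {y::'a. abs_trace y = 0}"
proof -
  have inj: "inj (\<lambda>x::'a. x ^ s)" by (rule inj_power_if_coprime[OF assms])
  hence "surj (\<lambda>x::'a. x ^ s)" by (simp add: finite_UNIV_inj_surj)
  have "trace_zeros s (0::'a) = card ((\<lambda>x. x ^ s) -` {y::'a. abs_trace y = 0})"
    by (simp add: trace_zeros_def vimage_def)
  also have "\<dots> = card {y::'a. abs_trace y = 0}"
    by (rule card_vimage_inj[OF inj]) (use \<open>surj (\<lambda>x::'a. x ^ s)\<close> in simp)
  finally show ?thesis .
qed

lemma card_trace_zeros_in_u:
  fixes x :: "'a::{finite,field}"
  assumes "x \<noteq> 0"
  shows "card {u::'a. abs_trace (x ^ s - u * x) = 0} = card {y::'a. abs_trace y = 0}"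
proof -
  have "bij_betw (\<lambda>u. x ^ s - u * x) {u. abs_trace (x ^ s - u * x) = 0} {y. abs_trace y = 0}"
    by (rule bij_betw_byWitness[where f'="\<lambda>y. (x ^ s - y) / x"]) (use assms in auto)
  thus ?thesis by (rule bij_betw_same_card)
qed

lemma sum_trace_zeros:
  assumes "s > 0"
  shows "(\<Sum>u\<in>UNIV. trace_zeros s (u::'a::{finite,field}))
           = CARD('a) + (CARD('a) - 1) * card {y::'a. abs_trace y = 0}"
proof -
  let ?Z = "card {y::'a. abs_trace y = 0}"
  have "(\<Sum>u\<in>UNIV. trace_zeros s (u::'a))
          = (\<Sum>u\<in>UNIV. card {x\<in>UNIV. abs_trace ((x::'a) ^ s - u * x) = 0})"
    by (simp add: trace_zeros_def)
  also have "\<dots> = (\<Sum>x\<in>UNIV. if x = (0::'a) then CARD('a) else ?Z)"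
    by (rule sum_multicount_gen) (use assms in \<open>simp_all add: card_trace_zeros_in_u power_0_left\<close>)
  also have "\<dots> = CARD('a) + (CARD('a) - 1) * ?Z"
    by (simp add: sum.If_cases Compl_eq_Diff_UNIV card_Diff_singleton)
  finally show ?thesis .
qed

lemma CARD_eq_CHAR_if_trace_kernel_trivial:
  assumes "card {y::'a::{finite,field}. abs_trace y = 0} = 1"
  shows "CARD('a) = CHAR('a)"
proof -
  obtain a where "{y::'a. abs_trace y = 0} = {a}" using assms by (rule card_1_singletonE)
  hence kernel: "{y::'a. abs_trace y = 0} = {0}"
    by (metis (mono_tags) abs_trace_0 mem_Collect_eq singletonD)
  have "inj (abs_trace :: 'a \<Rightarrow> 'a)"
  proof (rule injI)
    fix x y :: 'a
    assume "abs_trace x = abs_trace y"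
    hence "x - y \<in> {y. abs_trace y = 0}" by (simp add: abs_trace_diff)
    thus "x = y" using kernel by simp
  qed
  hence "CARD('a) \<le> card (of_nat ` {..<CHAR('a)} :: 'a set)"
    by (rule card_inj_on_le) (auto intro: abs_trace_in_prime_field)
  also have "\<dots> \<le> CHAR('a)" using card_image_le by fastforce
  finally show ?thesis using CHAR_dvd_CARD[where 'a='a] by (simp add: dvd_imp_le le_antisym)
qed

lemma three_le_trace_zeros_1:
  assumes "CHAR('a::{finite,field}) \<noteq> 2" and "s > 0" and "coprime s (CARD('a) - 1)"
  shows "3 \<le> trace_zeros s (1::'a)"
proof -
  have "odd CHAR('a)"
    by (intro prime_odd_nat prime_CHAR_finite_field) (use CHAR_ge_2[where 'a='a] assms(1) in linarith)
  hence "even (CARD('a) - 1)"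
    using ext_deg_pos[where 'a='a] by (simp add: CARD_eq_CHAR_power_ext_deg)
  have "odd s"
  proof
    assume "even s"
    from coprime_common_divisor_nat[OF assms(3) this \<open>even (CARD('a) - 1)\<close>] show False by simp
  qed
  have "(2::'a) \<noteq> 0"
  proof
    assume "(2::'a) = 0"
    hence "CHAR('a) dvd 2" using of_nat_eq_0_iff_char_dvd[where 'a='a, of 2] by simp
    thus False using assms(1) CHAR_ge_2[where 'a='a] by (auto dest: dvd_imp_le)
  qed
  hence "(-1::'a) \<noteq> 1" by (metis one_add_one neg_eq_iff_add_eq_0)
  hence "3 = card {0::'a, 1, -1}" by simp
  also have "\<dots> \<le> trace_zeros s (1::'a)" unfolding trace_zeros_def
    using assms(2) \<open>odd s\<close> by (intro card_mono) (simp_all add: power_0_left)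
  finally show ?thesis .
qed

lemma trace_zeros_not_constant:
  assumes "CARD('a::{finite,field}) > 2" and "s > 0" and "coprime s (CARD('a) - 1)"
  shows "\<exists>u::'a. u \<noteq> 0 \<and> trace_zeros s u \<noteq> trace_zeros s (1::'a)"
proof (rule ccontr)
  assume "\<not> ?thesis"
  hence const: "trace_zeros s u = trace_zeros s (1::'a)" if "u \<noteq> 0" for u :: 'a
    using that by blast
  let ?Z = "card {y::'a. abs_trace y = 0}" and ?N = "trace_zeros s (1::'a)" and ?d = "CARD('a) - 1"
  have "(\<Sum>u\<in>UNIV. trace_zeros s (u::'a)) = trace_zeros s (0::'a) + ?d * ?N"
  proof -
    have "(\<Sum>u\<in>UNIV - {0}. trace_zeros s (u::'a)) = (\<Sum>u\<in>UNIV - {0::'a}. ?N)"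
      by (intro sum.cong refl const) simp
    hence "(\<Sum>u\<in>UNIV - {0}. trace_zeros s (u::'a)) = ?d * ?N"
      by (simp add: card_Diff_singleton)
    thus ?thesis by (simp add: sum.remove[of UNIV 0, where g="trace_zeros s"])
  qed
  hence eq: "?Z + ?d * ?N = ?d + 1 + ?d * ?Z"
    using sum_trace_zeros[OF assms(2), where 'a='a] trace_zeros_0[OF assms(2,3)] assms(1) by simp
  have Z: "0 < ?Z" "?Z \<le> ?d"
    using card_trace_kernel_pos[where 'a='a] card_trace_kernel_less[where 'a='a] by auto
  have "?Z = 1 \<and> ?N = 2"
  proof (cases "?N \<le> ?Z")
    case True
    hence "?d * ?N \<le> ?d * ?Z" by simp
    thus ?thesis using eq Z by linarith
  next
    case False
    hence "?d * ?Z + ?d \<le> ?d * ?N" using mult_le_mono2[of "?Z + 1" ?N ?d] by simp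
    hence Z1: "?Z = 1" using eq Z by linarith
    hence "?d * ?Z = ?d" by simp
    hence "?d * ?N = ?d * 2" using eq Z1 by linarith
    thus ?thesis using Z1 assms(1) by simp
  qed
  hence "CARD('a) = CHAR('a)" by (intro CARD_eq_CHAR_if_trace_kernel_trivial) simp
  hence "3 \<le> ?N" using assms by (intro three_le_trace_zeros_1) simp_all
  thus False using \<open>?Z = 1 \<and> ?N = 2\<close> by simp
qed

lemma zeta_power_eq_1_iff:
  assumes "p > 0"
  shows "zeta p ^ j = 1 \<longleftrightarrow> p dvd j"
proof -
  have "zeta p ^ j = exp (2 * of_real pi * \<i> * of_nat j / of_nat p)"
    by (simp add: zeta_def cis_conv_exp mult_ac flip: exp_of_nat_mult)
  thus ?thesis using complex_root_unity_eq_1[of p j] assms by simp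
qed

lemma zeta_power_mod:
  assumes "p > 0"
  shows "zeta p ^ k = zeta p ^ (k mod p)"
proof -
  have "zeta p ^ k = (zeta p ^ p) ^ (k div p) * zeta p ^ (k mod p)"
    by (simp flip: power_mult power_add)
  thus ?thesis using zeta_power_eq_1_iff[OF assms, of p] by simp
qed

lemma zeta_power_in_Qzeta:
  assumes "p > 0"
  shows "zeta p ^ k \<in> Qzeta p"
proof -
  have "(\<Sum>j<p. of_rat (if j = k mod p then 1 else 0) * zeta p ^ j)
          = (\<Sum>j<p. if j = k mod p then zeta p ^ j else 0)"
    by (intro sum.cong) auto
  also have "\<dots> = zeta p ^ k" using assms zeta_power_mod[OF assms, of k] by simp
  finally show ?thesis unfolding Qzeta_def by (intro CollectI exI[of _ "\<lambda>j. if j = k mod p then 1 else 0"]) simp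
qed

lemma Qzeta_add:
  assumes "x \<in> Qzeta p" and "y \<in> Qzeta p"
  shows "x + y \<in> Qzeta p"
proof -
  obtain r r' where "x = (\<Sum>j<p. of_rat (r j) * zeta p ^ j)" "y = (\<Sum>j<p. of_rat (r' j) * zeta p ^ j)"
    using assms unfolding Qzeta_def by blast
  hence "x + y = (\<Sum>j<p. of_rat (r j + r' j) * zeta p ^ j)"
    by (simp add: of_rat_add distrib_right sum.distrib)
  thus ?thesis unfolding Qzeta_def by (intro CollectI exI[of _ "\<lambda>j. r j + r' j"]) simp
qed

lemma sum_zeta_powers_in_Qzeta:
  assumes "p > 0"
  shows "(\<Sum>x\<in>A. zeta p ^ e x) \<in> Qzeta p"
proof (induction A rule: infinite_finite_induct)
  case (insert x F)
  thus ?case by (simp add: Qzeta_add zeta_power_in_Qzeta[OF assms])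
qed (simp_all add: Qzeta_def exI[of _ "\<lambda>_. 0"])

context
  fixes p \<gamma> :: nat and \<sigma> :: "complex \<Rightarrow> complex"
  assumes p: "p > 0" and sig: "is_galois_sigma p \<gamma> \<sigma>"
begin

lemma galois_sigma_add: "x \<in> Qzeta p \<Longrightarrow> y \<in> Qzeta p \<Longrightarrow> \<sigma> (x + y) = \<sigma> x + \<sigma> y"
  using sig unfolding is_galois_sigma_def by blast

lemma galois_sigma_mult: "x \<in> Qzeta p \<Longrightarrow> y \<in> Qzeta p \<Longrightarrow> \<sigma> (x * y) = \<sigma> x * \<sigma> y"
  using sig unfolding is_galois_sigma_def by blast

lemma galois_sigma_zeta_power: "\<sigma> (zeta p ^ k) = zeta p ^ (\<gamma> * k)"
proof (induction k)
  case 0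
  thus ?case using sig by (simp add: is_galois_sigma_def)
next
  case (Suc k)
  have "\<sigma> (zeta p ^ Suc k) = \<sigma> (zeta p ^ k) * \<sigma> (zeta p)"
    using galois_sigma_mult[OF zeta_power_in_Qzeta[OF p, of k] zeta_power_in_Qzeta[OF p, of 1]]
    by (simp add: mult.commute)
  thus ?case using Suc sig by (simp add: is_galois_sigma_def power_add)
qed

lemma galois_sigma_sum_zeta_powers: "\<sigma> (\<Sum>x\<in>A. zeta p ^ e x) = (\<Sum>x\<in>A. zeta p ^ (\<gamma> * e x))"
proof (induction A rule: infinite_finite_induct)
  case (insert x F)
  thus ?case
    by (simp add: galois_sigma_add zeta_power_in_Qzeta[OF p] sum_zeta_powers_in_Qzeta[OF p]
        galois_sigma_zeta_power)
qed (use galois_sigma_add[of 0 0] sum_zeta_powers_in_Qzeta[OF p, of _ "{}"] in simp_all)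

lemma galois_sigma_iterate_sum_zeta_powers:
  "(\<sigma> ^^ n) (\<Sum>x\<in>A. zeta p ^ e x) = (\<Sum>x\<in>A. zeta p ^ (\<gamma> ^ n * e x))"
  by (induction n) (simp_all add: galois_sigma_sum_zeta_powers mult.assoc)

lemma galois_sigma_iterate_2: "(\<sigma> ^^ n) 2 = 2"
proof -
  have "(2::complex) = (\<Sum>x\<in>{0, 1::nat}. zeta p ^ 0)" by simp
  thus ?thesis by (simp only: galois_sigma_iterate_sum_zeta_powers) simp
qed

end

text \<open>As \<open>n\<close> runs below \<open>p - 1\<close>, \<open>\<gamma>\<^sup>n mod p\<close> runs through the nonzero residues.\<close>

lemma sum_zeta_power_primroot_orbit:
  assumes "prime p" and "residue_primroot p \<gamma>"
  shows "(\<Sum>n<p - 1. zeta p ^ (\<gamma> ^ n * j)) = (if p dvd j then of_nat (p - 1) else -1)"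
proof -
  have p: "p > 1" using assms(1) prime_gt_1_nat by blast
  define \<omega> where "\<omega> = zeta p ^ j"
  have \<omega>_power: "\<omega> ^ m = \<omega> ^ (m mod p)" for m
    unfolding \<omega>_def using zeta_power_mod[of p "j * m"] zeta_power_mod[of p "j * (m mod p)"] p
    by (simp add: power_mult[symmetric] mod_mult_right_eq)
  have "(\<Sum>n<p - 1. zeta p ^ (\<gamma> ^ n * j)) = (\<Sum>n<totient p. \<omega> ^ (\<gamma> ^ n mod p))"
    by (simp add: totient_prime[OF assms(1)] flip: \<omega>_power) (simp add: \<omega>_def power_mult mult.commute)
  also have "\<dots> = (\<Sum>t\<in>totatives p. \<omega> ^ t)"
    by (rule sum.reindex_bij_betw[OF residue_primroot_is_generator[OF p assms(2)]])
  also have "\<dots> = (\<Sum>t<p. \<omega> ^ t) - 1"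
    using p by (simp add: totatives_prime[OF assms(1)] lessThan_atLeast0 sum.atLeast_Suc_lessThan
                          greaterThanLessThan_eq atLeastSucLessThan_greaterThanLessThan)
  also have "\<dots> = (if p dvd j then of_nat (p - 1) else -1)"
  proof (cases "p dvd j")
    case True
    hence "\<omega> = 1" unfolding \<omega>_def using zeta_power_eq_1_iff p by simp
    thus ?thesis using True p by (simp add: of_nat_diff)
  next
    case False
    hence "\<omega> \<noteq> 1" "\<omega> ^ p = 1"
      unfolding \<omega>_def using zeta_power_eq_1_iff[of p] p by (simp_all flip: power_mult)
    thus ?thesis using False by (simp add: sum_gp_strict)
  qed
  finally show ?thesis .
qed

lemma galois_orbit_sum_sum_zeta_powers:
  assumes "prime p" and "residue_primroot p \<gamma>" and "is_galois_sigma p \<gamma> \<sigma>" and "finite A"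
  shows "(\<Sum>n<p - 1. (\<sigma> ^^ n) ((\<sigma> ^^ k) (\<Sum>x\<in>A. zeta p ^ e x)))
           = of_nat p * of_nat (card {x\<in>A. p dvd e x}) - of_nat (card A)"
proof -
  have p: "p > 0" using assms(1) prime_gt_0_nat by blast
  have "coprime p \<gamma>" using assms(2) by (simp add: residue_primroot_def)
  hence dvd_iff: "p dvd \<gamma> ^ m * j \<longleftrightarrow> p dvd j" for m j
    by (simp add: coprime_dvd_mult_right_iff)
  have "(\<Sum>n<p - 1. (\<sigma> ^^ n) ((\<sigma> ^^ k) (\<Sum>x\<in>A. zeta p ^ e x)))
          = (\<Sum>x\<in>A. \<Sum>n<p - 1. zeta p ^ (\<gamma> ^ n * (\<gamma> ^ k * e x)))"
    by (simp add: galois_sigma_iterate_sum_zeta_powers[OF p assms(3)]) (rule sum.swap)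
  also have "\<dots> = (\<Sum>x\<in>A. if p dvd e x then of_nat (p - 1) else -1)"
    by (intro sum.cong refl) (simp only: sum_zeta_power_primroot_orbit[OF assms(1,2)] dvd_iff)
  also have "\<dots> = (\<Sum>x\<in>A. of_nat p * (if p dvd e x then 1 else 0) - 1)"
    using p by (intro sum.cong) (auto simp: of_nat_diff)
  also have "\<dots> = of_nat p * of_nat (card {x\<in>A. p dvd e x}) - of_nat (card A)"
    using assms(4) by (simp add: sum_subtractf sum_distrib_left[symmetric] sum.If_cases Int_def)
  finally show ?thesis .
qed

lemma Wsum_eq_sum_zeta_powers:
  "Wsum s u = (\<Sum>x\<in>UNIV. zeta CHAR('a) ^ trace_nat (x ^ s - u * (x::'a::{finite,field})))"
  by (simp add: Wsum_def psi_def)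

lemma galois_orbit_sum_Wsum:
  fixes u :: "'a::{finite,field}"
  assumes "residue_primroot CHAR('a) \<gamma>" and "is_galois_sigma CHAR('a) \<gamma> \<sigma>"
  shows "(\<Sum>n<CHAR('a) - 1. (\<sigma> ^^ n) ((\<sigma> ^^ k) (Wsum s u)))
           = of_nat CHAR('a) * of_nat (trace_zeros s u) - of_nat CARD('a)"
  unfolding Wsum_eq_sum_zeta_powers galois_orbit_sum_sum_zeta_powers[OF prime_CHAR_finite_field assms finite]
  by (simp add: CHAR_dvd_trace_nat_iff trace_zeros_def)

lemma Wset_CARD_2:
  assumes "CARD('a::{finite,field}) = 2" and "s > 0"
  shows "Wset TYPE('a) s = {2}"
proof -
  have UNIV_eq: "UNIV = {0::'a, 1}" using assms(1) by (intro card_subset_eq[symmetric]) auto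
  have "x ^ s = x" for x :: 'a
  proof -
    have "x \<in> {0, 1}" using UNIV_eq by blast
    thus ?thesis using assms(2) by auto
  qed
  hence "Wsum s (1::'a) = 2" using assms(1) by (simp add: Wsum_eq_sum_zeta_powers)
  moreover have "u \<noteq> 0 \<longleftrightarrow> u = (1::'a)" for u using UNIV_eq by auto
  ultimately show ?thesis by (auto simp: Wset_def)
qed

lemma not_single_cycle_Wset:
  assumes "CARD('a::{finite,field}) > 2" and "s > 0" and "coprime s (CARD('a) - 1)"
    and "residue_primroot CHAR('a) \<gamma>" and "is_galois_sigma CHAR('a) \<gamma> \<sigma>"
  shows "\<not> single_cycle \<sigma> (Wset TYPE('a) s)"
proof
  assume "single_cycle \<sigma> (Wset TYPE('a) s)"
  moreover have "Wsum s (1::'a) \<in> Wset TYPE('a) s" by (auto simp: Wset_def)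
  ultimately have orbit: "Wset TYPE('a) s = {(\<sigma> ^^ k) (Wsum s (1::'a)) | k. True}"
    unfolding single_cycle_def by blast
  have "trace_zeros s u = trace_zeros s (1::'a)" if "u \<noteq> 0" for u :: 'a
  proof -
    have "Wsum s u \<in> Wset TYPE('a) s" using that by (auto simp: Wset_def)
    then obtain k where "Wsum s u = (\<sigma> ^^ k) (Wsum s (1::'a))" using orbit by blast
    hence "(\<sigma> ^^ 0) (Wsum s u) = (\<sigma> ^^ k) (Wsum s (1::'a))" by simp
    hence "(of_nat (CHAR('a) * trace_zeros s u) :: complex) = of_nat (CHAR('a) * trace_zeros s (1::'a))"
      using galois_orbit_sum_Wsum[OF assms(4,5), of 0 s u] galois_orbit_sum_Wsum[OF assms(4,5), of k s 1]
      by simp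
    thus ?thesis using prime_CHAR_finite_field[where 'a='a] by (simp only: of_nat_eq_iff) simp
  qed
  thus False using trace_zeros_not_constant[OF assms(1-3)] by blast
qed

theorem proposition2p5:
  fixes s \<gamma> :: nat and \<sigma> :: "complex \<Rightarrow> complex"
  assumes "s > 0"
    and "coprime s (CARD('a::{finite,field}) - 1)"
    and "residue_primroot CHAR('a) \<gamma>"
    and "is_galois_sigma CHAR('a) \<gamma> \<sigma>"
  shows "(single_cycle \<sigma> (Wset TYPE('a) s) \<longleftrightarrow> CARD('a) = 2)
         \<and> (CARD('a) = 2 \<longrightarrow> degenerate TYPE('a) s \<and> card (Wset TYPE('a) s) = 1)"
proof (cases "CARD('a) = 2")
  case True
  have "single_cycle \<sigma> {2}"
    using galois_sigma_iterate_2[OF _ assms(4)] prime_CHAR_finite_field[where 'a='a]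
    by (auto simp: single_cycle_def prime_gt_0_nat)
  moreover have "degenerate TYPE('a) s"
    using True by (auto simp: degenerate_def cong_def)
  ultimately show ?thesis using True Wset_CARD_2[OF True assms(1)] by simp
next
  case False
  hence "CARD('a) > 2" using CARD_ge_2[where 'a='a] by simp
  thus ?thesis using False not_single_cycle_Wset[OF _ assms] by blast
qed

end
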